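(* Assume $N\subseteq Z(G)$ and let $\sigma\in Z^2(\bar G,N)$ be a $2$-cocycle of the central extension $1\to N\to G\to\bar G\to 1$, given by $\sigma(\bar x,\bar y)=s(\bar x)s(\bar y)s(\bar x\bar y)^{-1}$ for a set-theoretic section $s:\bar G\to G$ with $s(\bar 1)=1$. Then there is an isomorphism of quasi-Hopf algebras $$D^{\omega}(G,N)\cong \mathbb{C}[N]\#_\sigma D^{\omega}(\bar G),$$ where $\mathbb{C}[N]\#_\sigma D^{\omega}(\bar G)$ is the vector space $\mathbb{C}[N]\otimes D^{\omega}(\bar G)$ with basis $m\#(e(\bar g)\bowtie\bar x)$ ($m\in N$, $\bar g,\bar x\in\bar G$), multiplication $$\big(m\#(e(\bar g)\bowtie\bar x)\big)\big(n\#(e(\bar h)\bowtie\bar y)\big)= mn\,\sigma(\bar x,\bar y)\#\big((e(\bar g)\bowtie\bar x)(e(\bar h)\bowtie\bar y)\big),$$ coproduct $\Delta(m\#(e(\bar g)\bowtie\bar x))=\sum_{\bar a\bar b=\bar g}\gamma_{\bar x}(\bar a,\bar b)\,(m\#(e(\bar a)\bowtie\bar x))\otimes(m\#(e(\bar b)\bowtie\bar x))$, and associator, counit, antipode, $\alpha,\beta$ those of $D^{\omega}(\bar G)$ (with $1\in N$ in the first tensor factor for $\Phi,\alpha,\beta$, counit $\epsilon(m\#u)=\epsilon(u)$, and antipode $S(m\#(e(\bar g)\bowtie \bar x))$ given by the antipode of $D^\omega(\bar G)$ twisted correspondingly so that the isomorphism $m\#(e(\bar g)\bowtie\bar x)\mapsto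 e(\bar g)\bowtie m\,s(\bar x)$ holds).
   Context: Notation. $G$ is a finite group, $N\trianglelefteq G$, $\bar G=G/N$, $\bar g=gN$, $\bar g^x=\bar x^{-1}\bar g\bar x$. $\omega$ is a normalized $\mathbb{C}^*$-valued $3$-cocycle on $\bar G$, and $\theta_{\bar g}(\bar x,\bar y)=\frac{\omega(\bar g,\bar x,\bar y)\omega(\bar x,\bar y,\bar g^{xy})}{\omega(\bar x,\bar g,\bar y^{g})}$, $\gamma_{\bar g}(\bar x,\bar y)=\frac{\omega(\bar x,\bar y,\bar g)\omega(\bar g,\bar x^{g},\bar y^{g})}{\omega(\bar x,\bar g,\bar y^{g})}$. $D^{\omega}(G,N)$ is the quasi-Hopf algebra with basis $e(\bar g)\bowtie x$ ($\bar g\in\bar G$, $x\in G$), product $(e(\bar g)\bowtie x)(e(\bar h)\bowtie y)=\delta_{\bar g^x,\bar h}\theta_{\bar g}(\bar x,\bar y)e(\bar g)\bowtie xy$, coproduct $\Delta(e(\bar g)\bowtie x)=\sum_{\bar a\bar b=\bar g}\gamma_{\bar x}(\bar a,\bar b)(e(\bar a)\bowtie x)\otimes(e(\bar b)\bowtie x)$, associator $\Phi=\sum\omega(\bar g,\bar h,\bar k)^{-1}(e(\bar g)\bowtie1)\otimes(e(\bar h)\bowtie1)\otimes(e(\bar k)\bowtie1)$, counit $\epsilon(e(\bar g)\bowtie x)=\delta_{\bar g,\bar 1}$, antipode $S(e(\bar g)\bowtie x)=\theta_{\bar g^{-1}}(\bar x,\bar x^{-1})\gamma_{\bar x}(\bar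 g,\bar g^{-1})^{-1}e((\bar g^{-1})^x)\bowtie x^{-1}$, $\alpha=1$, $\beta=\sum_{\bar g}\omega(\bar g,\bar g^{-1},\bar g)e(\bar g)\bowtie 1$. The twisted quantum double $D^{\omega}(\bar G)$ is $D^{\omega}(\bar G,\{1\})$, with basis $e(\bar g)\bowtie\bar x$, $\bar g,\bar x\in\bar G$, and the same formulas. *)

theory Defs
  imports "HOL-Algebra.Algebra" Complex_Main
begin

text \<open>An element of the algebra is a function 'b => complex vanishing off qbasis.
  qmult b b' is the product of basis elements b, b' (as a vector); qcomult b is
  Delta(b) as a vector in A (x) A (a function on pairs of basis elements);
  qassoc is the associator Phi in A (x) A (x) A; qcounit b = epsilon(b);
  qantipode b = S(b) as a vector; qunit, qalpha, qbeta are vectors.\<close>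

record 'b qhalg =
  qbasis :: "'b set"
  qmult :: "'b \<Rightarrow> 'b \<Rightarrow> 'b \<Rightarrow> complex"
  qunit :: "'b \<Rightarrow> complex"
  qcomult :: "'b \<Rightarrow> 'b \<times> 'b \<Rightarrow> complex"
  qassoc :: "'b \<times> 'b \<times> 'b \<Rightarrow> complex"
  qcounit :: "'b \<Rightarrow> complex"
  qantipode :: "'b \<Rightarrow> 'b \<Rightarrow> complex"
  qalpha :: "'b \<Rightarrow> complex"
  qbeta :: "'b \<Rightarrow> complex"

definition qvecs :: "'b qhalg \<Rightarrow> ('b \<Rightarrow> complex) set" where
  "qvecs A = {f. \<forall>b. b \<notin> qbasis A \<longrightarrow> f b = 0}"

definition qmulL :: "'b qhalg \<Rightarrow> ('b \<Rightarrow> complex) \<Rightarrow> ('b \<Rightarrow> complex) \<Rightarrow> 'b \<Rightarrow> complex" where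
  "qmulL A f g = (\<lambda>c. \<Sum>a\<in>qbasis A. \<Sum>a'\<in>qbasis A. f a * g a' * qmult A a a' c)"

definition qcomulL :: "'b qhalg \<Rightarrow> ('b \<Rightarrow> complex) \<Rightarrow> 'b \<times> 'b \<Rightarrow> complex" where
  "qcomulL A f = (\<lambda>p. \<Sum>a\<in>qbasis A. f a * qcomult A a p)"

definition qcounitL :: "'b qhalg \<Rightarrow> ('b \<Rightarrow> complex) \<Rightarrow> complex" where
  "qcounitL A f = (\<Sum>a\<in>qbasis A. f a * qcounit A a)"

definition qantipodeL :: "'b qhalg \<Rightarrow> ('b \<Rightarrow> complex) \<Rightarrow> 'b \<Rightarrow> complex" where
  "qantipodeL A f = (\<lambda>c. \<Sum>a\<in>qbasis A. f a * qantipode A a c)"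

definition linmap :: "'b set \<Rightarrow> ('b \<Rightarrow> 'c \<Rightarrow> complex) \<Rightarrow> ('b \<Rightarrow> complex) \<Rightarrow> 'c \<Rightarrow> complex" where
  "linmap B M f = (\<lambda>c. \<Sum>b\<in>B. f b * M b c)"

definition linmap2 :: "'b set \<Rightarrow> ('b \<Rightarrow> 'c \<Rightarrow> complex) \<Rightarrow> ('b \<times> 'b \<Rightarrow> complex) \<Rightarrow> 'c \<times> 'c \<Rightarrow> complex" where
  "linmap2 B M t = (\<lambda>(c, c'). \<Sum>b\<in>B. \<Sum>b'\<in>B. t (b, b') * M b c * M b' c')"

definition linmap3 :: "'b set \<Rightarrow> ('b \<Rightarrow> 'c \<Rightarrow> complex) \<Rightarrow> ('b \<times> 'b \<times> 'b \<Rightarrow> complex) \<Rightarrow> 'c \<times> 'c \<times> 'c \<Rightarrow> complex" where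
  "linmap3 B M t = (\<lambda>(c, c', c''). \<Sum>b\<in>B. \<Sum>b'\<in>B. \<Sum>b''\<in>B.
       t (b, b', b'') * M b c * M b' c' * M b'' c'')"

definition qh_iso :: "'b qhalg \<Rightarrow> 'c qhalg \<Rightarrow> ('b \<Rightarrow> 'c \<Rightarrow> complex) \<Rightarrow> bool" where
  "qh_iso A1 A2 M \<longleftrightarrow>
     (let B = qbasis A1; F = linmap B M in
      finite (qbasis A1) \<and> finite (qbasis A2) \<and>
      bij_betw F (qvecs A1) (qvecs A2) \<and>
      (\<forall>b\<in>B. \<forall>b'\<in>B. F (qmult A1 b b') = qmulL A2 (M b) (M b')) \<and>
      F (qunit A1) = qunit A2 \<and>
      (\<forall>b\<in>B. linmap2 B M (qcomult A1 b) = qcomulL A2 (M b)) \<and>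
      linmap3 B M (qassoc A1) = qassoc A2 \<and>
      (\<forall>b\<in>B. qcounitL A2 (M b) = qcounit A1 b) \<and>
      (\<forall>b\<in>B. F (qantipode A1 b) = qantipodeL A2 (M b)) \<and>
      F (qalpha A1) = qalpha A2 \<and>
      F (qbeta A1) = qbeta A2)"

text \<open>Quotient group G/N is the HOL-Algebra group G Mod N (right cosets).\<close>
definition qbar :: "('a, 'm) monoid_scheme \<Rightarrow> 'a set \<Rightarrow> 'a \<Rightarrow> 'a set" where
  "qbar G N x = N #>\<^bsub>G\<^esub> x"

definition qconj :: "('a, 'm) monoid_scheme \<Rightarrow> 'a set \<Rightarrow> 'a set \<Rightarrow> 'a set \<Rightarrow> 'a set" where
  "qconj G N g x = inv\<^bsub>G Mod N\<^esub> x \<otimes>\<^bsub>G Mod N\<^esub> g \<otimes>\<^bsub>G Mod N\<^esub> x"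

definition normalized_3cocycle :: "('g, 'n) monoid_scheme \<Rightarrow> ('g \<Rightarrow> 'g \<Rightarrow> 'g \<Rightarrow> complex) \<Rightarrow> bool" where
  "normalized_3cocycle H \<omega> \<longleftrightarrow>
     (\<forall>a\<in>carrier H. \<forall>b\<in>carrier H. \<forall>c\<in>carrier H. \<omega> a b c \<noteq> 0) \<and>
     (\<forall>a\<in>carrier H. \<forall>b\<in>carrier H. \<forall>c\<in>carrier H. \<forall>d\<in>carrier H.
        \<omega> b c d * \<omega> a (b \<otimes>\<^bsub>H\<^esub> c) d * \<omega> a b c
        = \<omega> (a \<otimes>\<^bsub>H\<^esub> b) c d * \<omega> a b (c \<otimes>\<^bsub>H\<^esub> d)) \<and>
     (\<forall>a\<in>carrier H. \<forall>b\<in>carrier H. \<forall>c\<in>carrier H.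
        (a = \<one>\<^bsub>H\<^esub> \<or> b = \<one>\<^bsub>H\<^esub> \<or> c = \<one>\<^bsub>H\<^esub>) \<longrightarrow> \<omega> a b c = 1)"

definition qtheta :: "('a, 'm) monoid_scheme \<Rightarrow> 'a set \<Rightarrow> ('a set \<Rightarrow> 'a set \<Rightarrow> 'a set \<Rightarrow> complex)
    \<Rightarrow> 'a set \<Rightarrow> 'a set \<Rightarrow> 'a set \<Rightarrow> complex" where
  "qtheta G N \<omega> g x y =
     \<omega> g x y * \<omega> x y (qconj G N g (x \<otimes>\<^bsub>G Mod N\<^esub> y)) / \<omega> x g (qconj G N y g)"

definition qgamma :: "('a, 'm) monoid_scheme \<Rightarrow> 'a set \<Rightarrow> ('a set \<Rightarrow> 'a set \<Rightarrow> 'a set \<Rightarrow> complex)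
    \<Rightarrow> 'a set \<Rightarrow> 'a set \<Rightarrow> 'a set \<Rightarrow> complex" where
  "qgamma G N \<omega> g x y =
     \<omega> x y g * \<omega> g (qconj G N x g) (qconj G N y g) / \<omega> x g (qconj G N y g)"

definition qsigma :: "('a, 'm) monoid_scheme \<Rightarrow> 'a set \<Rightarrow> ('a set \<Rightarrow> 'a) \<Rightarrow> 'a set \<Rightarrow> 'a set \<Rightarrow> 'a" where
  "qsigma G N s x y = s x \<otimes>\<^bsub>G\<^esub> s y \<otimes>\<^bsub>G\<^esub> inv\<^bsub>G\<^esub> (s (x \<otimes>\<^bsub>G Mod N\<^esub> y))"

section \<open>D^omega(G,N): basis element (g,x) stands for e(g) bowtie x\<close>

definition Dw :: "('a, 'm) monoid_scheme \<Rightarrow> 'a set \<Rightarrow> ('a set \<Rightarrow> 'a set \<Rightarrow> 'a set \<Rightarrow> complex)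
    \<Rightarrow> ('a set \<times> 'a) qhalg" where
  "Dw G N \<omega> = \<lparr>
     qbasis = carrier (G Mod N) \<times> carrier G,
     qmult = (\<lambda>(g, x) (h, y) c.
        if qconj G N g (qbar G N x) = h \<and> c = (g, x \<otimes>\<^bsub>G\<^esub> y)
        then qtheta G N \<omega> g (qbar G N x) (qbar G N y) else 0),
     qunit = (\<lambda>(g, x). if g \<in> carrier (G Mod N) \<and> x = \<one>\<^bsub>G\<^esub> then 1 else 0),
     qcomult = (\<lambda>(g, x) ((a, x1), (b, x2)).
        if x1 = x \<and> x2 = x \<and> a \<in> carrier (G Mod N) \<and> b \<in> carrier (G Mod N)
           \<and> a \<otimes>\<^bsub>G Mod N\<^esub> b = g
        then qgamma G N \<omega> (qbar G N x) a b else 0),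
     qassoc = (\<lambda>((g, x), (h, y), (k, z)).
        if g \<in> carrier (G Mod N) \<and> h \<in> carrier (G Mod N) \<and> k \<in> carrier (G Mod N)
           \<and> x = \<one>\<^bsub>G\<^esub> \<and> y = \<one>\<^bsub>G\<^esub> \<and> z = \<one>\<^bsub>G\<^esub>
        then 1 / \<omega> g h k else 0),
     qcounit = (\<lambda>(g, x). if g = \<one>\<^bsub>G Mod N\<^esub> then 1 else 0),
     qantipode = (\<lambda>(g, x) c.
        if c = (qconj G N (inv\<^bsub>G Mod N\<^esub> g) (qbar G N x), inv\<^bsub>G\<^esub> x)
        then qtheta G N \<omega> (inv\<^bsub>G Mod N\<^esub> g) (qbar G N x) (inv\<^bsub>G Mod N\<^esub> (qbar G N x))
             / qgamma G N \<omega> (qbar G N x) g (inv\<^bsub>G Mod N\<^esub> g)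
        else 0),
     qalpha = (\<lambda>(g, x). if g \<in> carrier (G Mod N) \<and> x = \<one>\<^bsub>G\<^esub> then 1 else 0),
     qbeta = (\<lambda>(g, x). if g \<in> carrier (G Mod N) \<and> x = \<one>\<^bsub>G\<^esub>
        then \<omega> g (inv\<^bsub>G Mod N\<^esub> g) g else 0) \<rparr>"

section \<open>C[N] #_sigma D^omega(G/N): basis element (m,g,x) stands for m # (e(g) bowtie x)\<close>

definition Smash :: "('a, 'm) monoid_scheme \<Rightarrow> 'a set \<Rightarrow> ('a set \<Rightarrow> 'a set \<Rightarrow> 'a set \<Rightarrow> complex)
    \<Rightarrow> ('a set \<Rightarrow> 'a) \<Rightarrow> ('a \<times> 'a set \<times> 'a set) qhalg" where
  "Smash G N \<omega> s = \<lparr>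
     qbasis = N \<times> carrier (G Mod N) \<times> carrier (G Mod N),
     qmult = (\<lambda>(m, g, x) (n, h, y) c.
        if qconj G N g x = h
           \<and> c = (m \<otimes>\<^bsub>G\<^esub> n \<otimes>\<^bsub>G\<^esub> qsigma G N s x y, g, x \<otimes>\<^bsub>G Mod N\<^esub> y)
        then qtheta G N \<omega> g x y else 0),
     qunit = (\<lambda>(m, g, x). if m = \<one>\<^bsub>G\<^esub> \<and> g \<in> carrier (G Mod N) \<and> x = \<one>\<^bsub>G Mod N\<^esub>
        then 1 else 0),
     qcomult = (\<lambda>(m, g, x) ((m1, a, x1), (m2, b, x2)).
        if m1 = m \<and> m2 = m \<and> x1 = x \<and> x2 = x
           \<and> a \<in> carrier (G Mod N) \<and> b \<in> carrier (G Mod N) \<and> a \<otimes>\<^bsub>G Mod N\<^esub> b = g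
        then qgamma G N \<omega> x a b else 0),
     qassoc = (\<lambda>((m1, g, x), (m2, h, y), (m3, k, z)).
        if m1 = \<one>\<^bsub>G\<^esub> \<and> m2 = \<one>\<^bsub>G\<^esub> \<and> m3 = \<one>\<^bsub>G\<^esub>
           \<and> g \<in> carrier (G Mod N) \<and> h \<in> carrier (G Mod N) \<and> k \<in> carrier (G Mod N)
           \<and> x = \<one>\<^bsub>G Mod N\<^esub> \<and> y = \<one>\<^bsub>G Mod N\<^esub> \<and> z = \<one>\<^bsub>G Mod N\<^esub>
        then 1 / \<omega> g h k else 0),
     qcounit = (\<lambda>(m, g, x). if g = \<one>\<^bsub>G Mod N\<^esub> then 1 else 0),
     qantipode = (\<lambda>(m, g, x) c.
        if c = (inv\<^bsub>G\<^esub> m \<otimes>\<^bsub>G\<^esub> inv\<^bsub>G\<^esub> (qsigma G N s x (inv\<^bsub>G Mod N\<^esub> x)),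
                qconj G N (inv\<^bsub>G Mod N\<^esub> g) x, inv\<^bsub>G Mod N\<^esub> x)
        then qtheta G N \<omega> (inv\<^bsub>G Mod N\<^esub> g) x (inv\<^bsub>G Mod N\<^esub> x)
             / qgamma G N \<omega> x g (inv\<^bsub>G Mod N\<^esub> g)
        else 0),
     qalpha = (\<lambda>(m, g, x). if m = \<one>\<^bsub>G\<^esub> \<and> g \<in> carrier (G Mod N) \<and> x = \<one>\<^bsub>G Mod N\<^esub>
        then 1 else 0),
     qbeta = (\<lambda>(m, g, x). if m = \<one>\<^bsub>G\<^esub> \<and> g \<in> carrier (G Mod N) \<and> x = \<one>\<^bsub>G Mod N\<^esub>
        then \<omega> g (inv\<^bsub>G Mod N\<^esub> g) g else 0) \<rparr>"

end

theory Submission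
  imports Defs
begin

(* Both algebras are given by structure constants on a finite basis, so an
   isomorphism can be produced by a bijection of bases  phi : B1 -> B2  under which every
   structure constant of the source equals the corresponding constant of the target; the
   linear map with the permutation matrix of phi is then a quasi-Hopf isomorphism,
   provided the target's constants vanish off its basis.

   It then fixes a central extension
   N -> G -> G/N with a normalised section s and shows: D^omega(G,N) has its constants
   supported on its basis, and the basis map  (m, g, x) |-> (g, m s(x))  is a bijection
   N x G/N x G/N -> G/N x G that transports all constants of C[N] #_sigma D^omega(G/N).
   The key group identities are  m n sigma(x,y) s(xy) = (m s(x)) (n s(y))  (multiplication)
   and  m^-1 sigma(x,x^-1)^-1 s(x^-1) = (m s(x))^-1  (antipode), both using that N is
   central.  The theorem lemma2p2 follows by combining the two parts. *)

section \<open>Transport of structure constants along a bijection of bases\<close>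

definition basis_vec :: "'c \<Rightarrow> 'c \<Rightarrow> complex" where
  "basis_vec p = (\<lambda>a. if a = p then 1 else 0)"

definition perm_matrix :: "('b \<Rightarrow> 'c) \<Rightarrow> 'b \<Rightarrow> 'c \<Rightarrow> complex" where
  "perm_matrix \<phi> b = basis_vec (\<phi> b)"

lemma sum_basis_vec:
  assumes "finite B" "p \<in> B"
  shows "(\<Sum>a\<in>B. basis_vec p a * f a) = (f p :: complex)"
proof -
  have "(\<Sum>a\<in>B. basis_vec p a * f a) = (\<Sum>a\<in>B. if a = p then f a else 0)"
    by (intro sum.cong) (auto simp: basis_vec_def)
  then show ?thesis using assms by simp
qed

lemma linmap_basis_vec:
  assumes "finite B" "p \<in> B"
  shows "linmap B M (basis_vec p) = M p"
  using sum_basis_vec[OF assms] by (simp add: linmap_def)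

lemma perm_matrix_collapse:
  assumes "finite B" "inj_on \<phi> B" "b0 \<in> B"
  shows "(\<Sum>b\<in>B. f b * perm_matrix \<phi> b (\<phi> b0)) = (f b0 :: complex)"
proof -
  have "(\<Sum>b\<in>B. f b * perm_matrix \<phi> b (\<phi> b0)) = (\<Sum>b\<in>B. if b = b0 then f b else 0)"
    using assms by (intro sum.cong) (auto simp: perm_matrix_def basis_vec_def dest: inj_onD)
  then show ?thesis using assms by simp
qed

lemma perm_matrix_off_image:
  "c \<notin> \<phi> ` B \<Longrightarrow> \<forall>b\<in>B. perm_matrix \<phi> b c = 0"
  by (auto simp: perm_matrix_def basis_vec_def)

lemma linmap_perm_matrix:
  fixes \<phi> :: "'b \<Rightarrow> 'c"
  assumes "finite B" "inj_on \<phi> B"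
    and "\<forall>b\<in>B. v b = w (\<phi> b)" and "\<forall>c. c \<notin> \<phi> ` B \<longrightarrow> w c = 0"
  shows "linmap B (perm_matrix \<phi>) v = w"
proof
  fix c
  show "linmap B (perm_matrix \<phi>) v c = w c"
  proof (cases "c \<in> \<phi> ` B")
    case True
    then obtain b0 where "b0 \<in> B" "c = \<phi> b0" by blast
    then show ?thesis
      using perm_matrix_collapse[OF assms(1,2)] assms(3) by (simp add: linmap_def)
  next
    case False
    then show ?thesis using assms(4) perm_matrix_off_image[OF False] by (simp add: linmap_def)
  qed
qed

lemma linmap2_perm_matrix:
  fixes \<phi> :: "'b \<Rightarrow> 'c"
  assumes "finite B" "inj_on \<phi> B"
    and "\<forall>b\<in>B. \<forall>b'\<in>B. v (b, b') = w (\<phi> b, \<phi> b')"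
    and "\<forall>c c'. c \<notin> \<phi> ` B \<or> c' \<notin> \<phi> ` B \<longrightarrow> w (c, c') = 0"
  shows "linmap2 B (perm_matrix \<phi>) v = w"
proof
  fix p :: "'c \<times> 'c"
  obtain c c' where p: "p = (c, c')" by fastforce
  show "linmap2 B (perm_matrix \<phi>) v p = w p"
  proof (cases "c \<in> \<phi> ` B \<and> c' \<in> \<phi> ` B")
    case True
    then obtain b0 b1 where b: "b0 \<in> B" "b1 \<in> B" "c = \<phi> b0" "c' = \<phi> b1" by blast
    have "linmap2 B (perm_matrix \<phi>) v p
        = (\<Sum>b\<in>B. (\<Sum>b'\<in>B. v (b, b') * perm_matrix \<phi> b' (\<phi> b1)) * perm_matrix \<phi> b (\<phi> b0))"
      by (simp add: linmap2_def p b sum_distrib_left sum_distrib_right mult_ac)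
    also have "\<dots> = v (b0, b1)"
      by (simp add: perm_matrix_collapse[OF assms(1,2)] b)
    finally show ?thesis using assms(3) b p by simp
  next
    case False
    then show ?thesis using assms(4) perm_matrix_off_image[of c \<phi> B] perm_matrix_off_image[of c' \<phi> B]
      by (auto simp: linmap2_def p)
  qed
qed

lemma linmap3_perm_matrix:
  fixes \<phi> :: "'b \<Rightarrow> 'c"
  assumes "finite B" "inj_on \<phi> B"
    and "\<forall>b\<in>B. \<forall>b'\<in>B. \<forall>b''\<in>B. v (b, b', b'') = w (\<phi> b, \<phi> b', \<phi> b'')"
    and "\<forall>c c' c''. c \<notin> \<phi> ` B \<or> c' \<notin> \<phi> ` B \<or> c'' \<notin> \<phi> ` B \<longrightarrow> w (c, c', c'') = 0"
  shows "linmap3 B (perm_matrix \<phi>) v = w"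
proof
  fix p :: "'c \<times> 'c \<times> 'c"
  obtain c c' c'' where p: "p = (c, c', c'')" by (cases p) fastforce
  show "linmap3 B (perm_matrix \<phi>) v p = w p"
  proof (cases "c \<in> \<phi> ` B \<and> c' \<in> \<phi> ` B \<and> c'' \<in> \<phi> ` B")
    case True
    then obtain b0 b1 b2 where b: "b0 \<in> B" "b1 \<in> B" "b2 \<in> B" "c = \<phi> b0" "c' = \<phi> b1" "c'' = \<phi> b2"
      by blast
    have "linmap3 B (perm_matrix \<phi>) v p
        = (\<Sum>b\<in>B. (\<Sum>b'\<in>B. (\<Sum>b''\<in>B. v (b, b', b'') * perm_matrix \<phi> b'' (\<phi> b2))
              * perm_matrix \<phi> b' (\<phi> b1)) * perm_matrix \<phi> b (\<phi> b0))"
      by (simp add: linmap3_def p b sum_distrib_left sum_distrib_right mult_ac)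
    also have "\<dots> = v (b0, b1, b2)"
      by (simp add: perm_matrix_collapse[OF assms(1,2)] b)
    finally show ?thesis using assms(3) b p by simp
  next
    case False
    then show ?thesis using assms(4) perm_matrix_off_image[of c \<phi> B] perm_matrix_off_image[of c' \<phi> B]
        perm_matrix_off_image[of c'' \<phi> B]
      by (auto simp: linmap3_def p)
  qed
qed

lemma bij_linmap_perm_matrix:
  fixes \<phi> :: "'b \<Rightarrow> 'c"
  assumes fin: "finite B" and bij: "bij_betw \<phi> B B'"
  shows "bij_betw (linmap B (perm_matrix \<phi>))
           {f. \<forall>b. b \<notin> B \<longrightarrow> f b = 0} {f. \<forall>c. c \<notin> B' \<longrightarrow> f c = 0}"
proof (rule bij_betwI')
  let ?F = "linmap B (perm_matrix \<phi>)"
  have inj: "inj_on \<phi> B" and img: "\<phi> ` B = B'" using bij by (auto simp: bij_betw_def)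
  have at_image: "?F f (\<phi> b) = f b" if "b \<in> B" for f b
    using perm_matrix_collapse[OF fin inj that] by (simp add: linmap_def)
  fix f g :: "'b \<Rightarrow> complex"
  assume f: "f \<in> {f. \<forall>b. b \<notin> B \<longrightarrow> f b = 0}" and g: "g \<in> {f. \<forall>b. b \<notin> B \<longrightarrow> f b = 0}"
  show "(?F f = ?F g) = (f = g)"
  proof
    assume eq: "?F f = ?F g"
    show "f = g"
    proof
      fix b
      show "f b = g b" using f g at_image[of b f] at_image[of b g] eq by (cases "b \<in> B") auto
    qed
  qed simp
next
  have img: "\<phi> ` B = B'" using bij by (auto simp: bij_betw_def)
  fix f :: "'b \<Rightarrow> complex"
  show "linmap B (perm_matrix \<phi>) f \<in> {f. \<forall>c. c \<notin> B' \<longrightarrow> f c = 0}"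
    using perm_matrix_off_image[of _ \<phi> B] img by (auto simp: linmap_def)
next
  have inj: "inj_on \<phi> B" and img: "\<phi> ` B = B'" using bij by (auto simp: bij_betw_def)
  fix h :: "'c \<Rightarrow> complex"
  assume h: "h \<in> {f. \<forall>c. c \<notin> B' \<longrightarrow> f c = 0}"
  let ?f = "\<lambda>b. if b \<in> B then h (\<phi> b) else 0"
  have "linmap B (perm_matrix \<phi>) ?f = h"
    using linmap_perm_matrix[OF fin inj, of ?f h] h img by simp
  then show "\<exists>f\<in>{f. \<forall>b. b \<notin> B \<longrightarrow> f b = 0}. h = linmap B (perm_matrix \<phi>) f"
    by (intro bexI[of _ ?f]) auto
qed

definition qh_supported :: "'c qhalg \<Rightarrow> bool" where
  "qh_supported A \<longleftrightarrow> (let B = qbasis A in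
     (\<forall>b\<in>B. \<forall>b'\<in>B. qmult A b b' \<in> qvecs A) \<and> qunit A \<in> qvecs A \<and>
     (\<forall>b\<in>B. \<forall>c c'. c \<notin> B \<or> c' \<notin> B \<longrightarrow> qcomult A b (c, c') = 0) \<and>
     (\<forall>c c' c''. c \<notin> B \<or> c' \<notin> B \<or> c'' \<notin> B \<longrightarrow> qassoc A (c, c', c'') = 0) \<and>
     (\<forall>b\<in>B. qantipode A b \<in> qvecs A) \<and> qalpha A \<in> qvecs A \<and> qbeta A \<in> qvecs A)"

definition basis_transport :: "('b \<Rightarrow> 'c) \<Rightarrow> 'b qhalg \<Rightarrow> 'c qhalg \<Rightarrow> bool" where
  "basis_transport \<phi> A1 A2 \<longleftrightarrow> (let B = qbasis A1 in
     bij_betw \<phi> B (qbasis A2) \<and>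
     (\<forall>b\<in>B. \<forall>b'\<in>B. \<forall>c\<in>B. qmult A1 b b' c = qmult A2 (\<phi> b) (\<phi> b') (\<phi> c)) \<and>
     (\<forall>b\<in>B. qunit A1 b = qunit A2 (\<phi> b)) \<and>
     (\<forall>b\<in>B. \<forall>b1\<in>B. \<forall>b2\<in>B. qcomult A1 b (b1, b2) = qcomult A2 (\<phi> b) (\<phi> b1, \<phi> b2)) \<and>
     (\<forall>b\<in>B. \<forall>b'\<in>B. \<forall>b''\<in>B. qassoc A1 (b, b', b'') = qassoc A2 (\<phi> b, \<phi> b', \<phi> b'')) \<and>
     (\<forall>b\<in>B. qcounit A1 b = qcounit A2 (\<phi> b)) \<and>
     (\<forall>b\<in>B. \<forall>c\<in>B. qantipode A1 b c = qantipode A2 (\<phi> b) (\<phi> c)) \<and>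
     (\<forall>b\<in>B. qalpha A1 b = qalpha A2 (\<phi> b)) \<and>
     (\<forall>b\<in>B. qbeta A1 b = qbeta A2 (\<phi> b)))"

lemma qmulL_basis_vec:
  assumes "finite (qbasis A)" "p \<in> qbasis A" "q \<in> qbasis A"
  shows "qmulL A (basis_vec p) (basis_vec q) = qmult A p q"
proof
  fix c
  have "qmulL A (basis_vec p) (basis_vec q) c
      = (\<Sum>a\<in>qbasis A. basis_vec p a * (\<Sum>a'\<in>qbasis A. basis_vec q a' * qmult A a a' c))"
    by (simp add: qmulL_def sum_distrib_left mult_ac)
  then show "qmulL A (basis_vec p) (basis_vec q) c = qmult A p q c"
    by (simp add: sum_basis_vec[OF assms(1)] assms(2,3))
qed

lemma qcomulL_basis_vec:
  "finite (qbasis A) \<Longrightarrow> p \<in> qbasis A \<Longrightarrow> qcomulL A (basis_vec p) = qcomult A p"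
  using linmap_basis_vec[of "qbasis A" p "qcomult A"] by (simp add: qcomulL_def linmap_def)

lemma qantipodeL_basis_vec:
  "finite (qbasis A) \<Longrightarrow> p \<in> qbasis A \<Longrightarrow> qantipodeL A (basis_vec p) = qantipode A p"
  using linmap_basis_vec[of "qbasis A" p "qantipode A"] by (simp add: qantipodeL_def linmap_def)

lemma qcounitL_basis_vec:
  "finite (qbasis A) \<Longrightarrow> p \<in> qbasis A \<Longrightarrow> qcounitL A (basis_vec p) = qcounit A p"
  using sum_basis_vec[of "qbasis A" p "qcounit A"] by (simp add: qcounitL_def mult.commute)

theorem qh_iso_of_basis_transport:
  assumes fin: "finite (qbasis A1)"
    and supp: "qh_supported A2" and tr: "basis_transport \<phi> A1 A2"
  shows "qh_iso A1 A2 (perm_matrix \<phi>)"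
proof -
  define B where "B = qbasis A1"
  let ?F = "linmap B (perm_matrix \<phi>)"
  have bij: "bij_betw \<phi> B (qbasis A2)"
    and t_mult: "\<forall>b\<in>B. \<forall>b'\<in>B. \<forall>c\<in>B. qmult A1 b b' c = qmult A2 (\<phi> b) (\<phi> b') (\<phi> c)"
    and t_unit: "\<forall>b\<in>B. qunit A1 b = qunit A2 (\<phi> b)"
    and t_comult: "\<forall>b\<in>B. \<forall>b1\<in>B. \<forall>b2\<in>B. qcomult A1 b (b1, b2) = qcomult A2 (\<phi> b) (\<phi> b1, \<phi> b2)"
    and t_assoc: "\<forall>b\<in>B. \<forall>b'\<in>B. \<forall>b''\<in>B. qassoc A1 (b, b', b'') = qassoc A2 (\<phi> b, \<phi> b', \<phi> b'')"
    and t_counit: "\<forall>b\<in>B. qcounit A1 b = qcounit A2 (\<phi> b)"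
    and t_anti: "\<forall>b\<in>B. \<forall>c\<in>B. qantipode A1 b c = qantipode A2 (\<phi> b) (\<phi> c)"
    and t_alpha: "\<forall>b\<in>B. qalpha A1 b = qalpha A2 (\<phi> b)"
    and t_beta: "\<forall>b\<in>B. qbeta A1 b = qbeta A2 (\<phi> b)"
    using tr by (simp_all add: basis_transport_def Let_def B_def)
  have fin1: "finite B" using fin by (simp add: B_def)
  have inj: "inj_on \<phi> B" and img: "\<phi> ` B = qbasis A2" using bij by (auto simp: bij_betw_def)
  have fin2: "finite (qbasis A2)" using fin1 img by (metis finite_imageI)
  have in2: "\<phi> b \<in> qbasis A2" if "b \<in> B" for b using img that by blast
  have s_mult: "\<forall>b\<in>B. \<forall>b'\<in>B. \<forall>c. c \<notin> \<phi> ` B \<longrightarrow> qmult A2 (\<phi> b) (\<phi> b') c = 0"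
    and s_unit: "\<forall>c. c \<notin> \<phi> ` B \<longrightarrow> qunit A2 c = 0"
    and s_comult: "\<forall>b\<in>B. \<forall>c c'. c \<notin> \<phi> ` B \<or> c' \<notin> \<phi> ` B \<longrightarrow> qcomult A2 (\<phi> b) (c, c') = 0"
    and s_assoc: "\<forall>c c' c''. c \<notin> \<phi> ` B \<or> c' \<notin> \<phi> ` B \<or> c'' \<notin> \<phi> ` B \<longrightarrow> qassoc A2 (c, c', c'') = 0"
    and s_anti: "\<forall>b\<in>B. \<forall>c. c \<notin> \<phi> ` B \<longrightarrow> qantipode A2 (\<phi> b) c = 0"
    and s_alpha: "\<forall>c. c \<notin> \<phi> ` B \<longrightarrow> qalpha A2 c = 0"
    and s_beta: "\<forall>c. c \<notin> \<phi> ` B \<longrightarrow> qbeta A2 c = 0"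
    using supp in2 by (simp_all add: qh_supported_def Let_def qvecs_def img)
  have "?F (qmult A1 b b') = qmulL A2 (perm_matrix \<phi> b) (perm_matrix \<phi> b')" if "b \<in> B" "b' \<in> B" for b b'
  proof -
    have "?F (qmult A1 b b') = qmult A2 (\<phi> b) (\<phi> b')"
      using linmap_perm_matrix[OF fin1 inj] t_mult s_mult that by simp
    then show ?thesis using qmulL_basis_vec[OF fin2 in2 in2] that by (simp add: perm_matrix_def)
  qed
  moreover have "linmap2 B (perm_matrix \<phi>) (qcomult A1 b) = qcomulL A2 (perm_matrix \<phi> b)" if "b \<in> B" for b
  proof -
    have "linmap2 B (perm_matrix \<phi>) (qcomult A1 b) = qcomult A2 (\<phi> b)"
      using linmap2_perm_matrix[OF fin1 inj] t_comult s_comult that by simp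
    then show ?thesis using qcomulL_basis_vec[OF fin2 in2] that by (simp add: perm_matrix_def)
  qed
  moreover have "?F (qantipode A1 b) = qantipodeL A2 (perm_matrix \<phi> b)" if "b \<in> B" for b
  proof -
    have "?F (qantipode A1 b) = qantipode A2 (\<phi> b)"
      using linmap_perm_matrix[OF fin1 inj] t_anti s_anti that by simp
    then show ?thesis using qantipodeL_basis_vec[OF fin2 in2] that by (simp add: perm_matrix_def)
  qed
  moreover have "qcounitL A2 (perm_matrix \<phi> b) = qcounit A1 b" if "b \<in> B" for b
    using qcounitL_basis_vec[OF fin2 in2] t_counit that by (simp add: perm_matrix_def)
  moreover have "?F (qunit A1) = qunit A2" "?F (qalpha A1) = qalpha A2" "?F (qbeta A1) = qbeta A2"
    using linmap_perm_matrix[OF fin1 inj] t_unit s_unit t_alpha s_alpha t_beta s_beta by simp_all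
  moreover have "linmap3 B (perm_matrix \<phi>) (qassoc A1) = qassoc A2"
    using linmap3_perm_matrix[OF fin1 inj] t_assoc s_assoc by simp
  ultimately show ?thesis
    using fin fin2 bij_linmap_perm_matrix[OF fin1 bij]
    unfolding qh_iso_def Let_def qvecs_def B_def[symmetric] by simp
qed

section \<open>Central extensions with a normalised section\<close>

locale central_section = normal +
  fixes s :: "'a set \<Rightarrow> 'a"
  assumes central: "\<And>n g. n \<in> H \<Longrightarrow> g \<in> carrier G \<Longrightarrow> n \<otimes> g = g \<otimes> n"
    and section_mem: "\<And>x. x \<in> carrier (G Mod H) \<Longrightarrow> s x \<in> x"
    and section_one: "s \<one>\<^bsub>G Mod H\<^esub> = \<one>"
begin

lemma quotient_group: "group (G Mod H)"
  by (rule factorgroup_is_group)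

lemma quotient_closed:
  assumes "x \<in> carrier (G Mod H)" "y \<in> carrier (G Mod H)"
  shows "x \<otimes>\<^bsub>G Mod H\<^esub> y \<in> carrier (G Mod H)" "inv\<^bsub>G Mod H\<^esub> x \<in> carrier (G Mod H)"
    and "qconj G H x y \<in> carrier (G Mod H)"
  using assms group.inv_closed[OF quotient_group] monoid.m_closed[OF group.is_monoid[OF quotient_group]]
  by (auto simp: qconj_def)

lemma N_closed: "n \<in> H \<Longrightarrow> n \<in> carrier G"
  using subset by blast

lemma section_closed: "x \<in> carrier (G Mod H) \<Longrightarrow> s x \<in> carrier G"
  using section_mem rcosets_carrier[OF is_group] by (auto simp: FactGroup_def)

lemma coset_section: "x \<in> carrier (G Mod H) \<Longrightarrow> x = H #> s x"
proof -
  assume x: "x \<in> carrier (G Mod H)"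
  then obtain a where a: "a \<in> carrier G" "x = H #> a" by (auto simp: FactGroup_def RCOSETS_def)
  then show ?thesis using repr_independence[OF _ a(1) subgroup_axioms] section_mem[OF x] by simp
qed

lemma qbar_mult_section: "m \<in> H \<Longrightarrow> x \<in> carrier (G Mod H) \<Longrightarrow> qbar G H (m \<otimes> s x) = x"
  unfolding qbar_def
  by (metis N_closed section_closed coset_mult_assoc[OF subset] rcos_const[OF is_group] coset_section)

lemma qbar_closed: "y \<in> carrier G \<Longrightarrow> qbar G H y \<in> carrier (G Mod H)"
  unfolding qbar_def FactGroup_def by (simp add: rcosetsI[OF subset])

lemma section_difference: "y \<in> carrier G \<Longrightarrow> y \<otimes> inv (s (qbar G H y)) \<in> H"
proof -
  assume y: "y \<in> carrier G"
  have "s (qbar G H y) \<in> H #> y" using section_mem qbar_closed[OF y] unfolding qbar_def by blast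
  then have "H #> y = H #> s (qbar G H y)" using repr_independence[OF _ y subgroup_axioms] by simp
  then have "y \<in> H #> s (qbar G H y)" using rcos_self[OF y subgroup_axioms] by simp
  then show ?thesis using rcos_module_imp[OF is_group section_closed[OF qbar_closed[OF y]]] by blast
qed

lemma qsigma_in_N:
  assumes x: "x \<in> carrier (G Mod H)" and y: "y \<in> carrier (G Mod H)"
  shows "qsigma G H s x y \<in> H"
proof -
  have xy: "x \<otimes>\<^bsub>G Mod H\<^esub> y \<in> carrier (G Mod H)" using quotient_closed[OF x y] by blast
  have c: "s x \<otimes> s y \<in> carrier G" using section_closed x y by simp
  have "x \<otimes>\<^bsub>G Mod H\<^esub> y = H #> (s x \<otimes> s y)"
    by (metis x y mult_FactGroup rcos_sum section_closed coset_section)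
  then have "s (x \<otimes>\<^bsub>G Mod H\<^esub> y) \<in> H #> (s x \<otimes> s y)" using section_mem[OF xy] by simp
  then have "inv (s (x \<otimes>\<^bsub>G Mod H\<^esub> y) \<otimes> inv (s x \<otimes> s y)) \<in> H"
    using rcos_module_imp[OF is_group c] by simp
  then show ?thesis using section_closed[OF xy] c by (simp add: qsigma_def inv_mult_group)
qed

lemma mult_section_eq_iff:
  assumes "m \<in> H" "m' \<in> H" "x \<in> carrier (G Mod H)" "x' \<in> carrier (G Mod H)"
  shows "m \<otimes> s x = m' \<otimes> s x' \<longleftrightarrow> m = m' \<and> x = x'"
proof
  assume eq: "m \<otimes> s x = m' \<otimes> s x'"
  then have "x = x'" using qbar_mult_section assms by metis
  then show "m = m' \<and> x = x'" using eq r_cancel assms section_closed N_closed by metis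
qed simp

lemma mult_section_eq_one:
  assumes "m \<in> H" "x \<in> carrier (G Mod H)"
  shows "m \<otimes> s x = \<one> \<longleftrightarrow> m = \<one> \<and> x = \<one>\<^bsub>G Mod H\<^esub>"
proof -
  have "\<one>\<^bsub>G Mod H\<^esub> \<in> carrier (G Mod H)"
    using monoid.one_closed[OF group.is_monoid[OF quotient_group]] .
  then show ?thesis
    using mult_section_eq_iff[OF assms(1) subgroup.one_closed[OF subgroup_axioms] assms(2)] section_one
    by (metis l_one one_closed)
qed

text \<open>Multiplication of the smash product matches G:
  (m n sigma(x,y)) s(xy) = (m s(x)) (n s(y)), using that n is central.\<close>
lemma mult_section_product:
  assumes "m \<in> H" "n \<in> H" "x \<in> carrier (G Mod H)" "y \<in> carrier (G Mod H)"
  shows "m \<otimes> n \<otimes> qsigma G H s x y \<otimes> s (x \<otimes>\<^bsub>G Mod H\<^esub> y) = m \<otimes> s x \<otimes> (n \<otimes> s y)"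
proof -
  have c: "m \<in> carrier G" "n \<in> carrier G" "s x \<in> carrier G" "s y \<in> carrier G"
    "s (x \<otimes>\<^bsub>G Mod H\<^esub> y) \<in> carrier G"
    using assms N_closed section_closed quotient_closed by auto
  have "m \<otimes> n \<otimes> qsigma G H s x y \<otimes> s (x \<otimes>\<^bsub>G Mod H\<^esub> y) = m \<otimes> (n \<otimes> s x) \<otimes> s y"
    unfolding qsigma_def using c by (simp add: m_assoc)
  also have "\<dots> = m \<otimes> s x \<otimes> (n \<otimes> s y)" using central[OF assms(2) c(3)] c by (simp add: m_assoc)
  finally show ?thesis .
qed

text \<open>The antipode of the smash product matches inversion in G:
  m^-1 sigma(x,x^-1)^-1 s(x^-1) = (m s(x))^-1.\<close>
lemma inverse_section_product:
  assumes m: "m \<in> H" and x: "x \<in> carrier (G Mod H)"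
  shows "inv m \<otimes> inv (qsigma G H s x (inv\<^bsub>G Mod H\<^esub> x)) \<otimes> s (inv\<^bsub>G Mod H\<^esub> x) = inv (m \<otimes> s x)"
proof -
  let ?x' = "inv\<^bsub>G Mod H\<^esub> x"
  let ?\<sigma> = "qsigma G H s x ?x'"
  have x': "?x' \<in> carrier (G Mod H)" using quotient_closed x by blast
  have \<sigma>N: "inv ?\<sigma> \<in> H" using qsigma_in_N[OF x x'] by simp
  have c: "m \<in> carrier G" "s x \<in> carrier G" "s ?x' \<in> carrier G" "?\<sigma> \<in> carrier G"
    using m x x' N_closed section_closed qsigma_in_N[OF x x'] by auto
  have "?\<sigma> = s x \<otimes> s ?x'"
    using group.r_inv[OF quotient_group x] section_one c by (simp add: qsigma_def)
  then have s_inv: "s ?x' = inv (s x) \<otimes> ?\<sigma>" using c inv_solve_left by auto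
  have "inv ?\<sigma> \<otimes> s ?x' = inv ?\<sigma> \<otimes> inv (s x) \<otimes> ?\<sigma>" using s_inv c by (simp add: m_assoc)
  also have "\<dots> = inv (s x) \<otimes> inv ?\<sigma> \<otimes> ?\<sigma>" using central[OF \<sigma>N, of "inv (s x)"] c by simp
  also have "\<dots> = inv (s x)" using c by (simp add: m_assoc)
  finally have "inv m \<otimes> inv ?\<sigma> \<otimes> s ?x' = inv (s x) \<otimes> inv m"
    using c central[of "inv m" "inv (s x)"] m by (simp add: m_assoc)
  then show ?thesis using c by (simp add: inv_mult_group)
qed

abbreviation smash_basis :: "('a \<times> 'a set \<times> 'a set) set" where
  "smash_basis \<equiv> H \<times> carrier (G Mod H) \<times> carrier (G Mod H)"

lemma finite_smash_basis:
  assumes "finite (carrier G)" shows "finite smash_basis"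
proof -
  have "carrier (G Mod H) \<subseteq> Pow (carrier G)"
    using rcosets_carrier[OF is_group] by (auto simp: FactGroup_def)
  then show ?thesis using assms finite_subset[OF subset] finite_subset by blast
qed

definition basis_map :: "'a \<times> 'a set \<times> 'a set \<Rightarrow> 'a set \<times> 'a" where
  "basis_map = (\<lambda>(m, g, x). (g, m \<otimes> s x))"

lemma basis_map_apply [simp]: "basis_map (m, g, x) = (g, m \<otimes> s x)"
  by (simp add: basis_map_def)

text \<open>By uniqueness of the decomposition m s(x), the basis map is a bijection onto the
  basis  G/H x G  of D^omega(G,H).\<close>
lemma basis_map_bij:
  "bij_betw basis_map smash_basis (carrier (G Mod H) \<times> carrier G)"
proof (rule bij_betw_imageI)
  show "inj_on basis_map smash_basis"
    using mult_section_eq_iff by (auto simp: inj_on_def)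
  show "basis_map ` smash_basis = carrier (G Mod H) \<times> carrier G"
  proof (intro equalityI subsetI)
    fix c assume "c \<in> carrier (G Mod H) \<times> carrier G"
    then obtain g y where c: "c = (g, y)" "g \<in> carrier (G Mod H)" "y \<in> carrier G" by blast
    let ?b = "(y \<otimes> inv (s (qbar G H y)), g, qbar G H y)"
    have "basis_map ?b = c"
      using c section_closed[OF qbar_closed[OF c(3)]] by (simp add: m_assoc)
    moreover have "?b \<in> smash_basis"
      using section_difference qbar_closed c by blast
    ultimately show "c \<in> basis_map ` smash_basis" by force
  qed (auto simp: N_closed section_closed)
qed

lemma basis_map_eq_iff: "b \<in> smash_basis \<Longrightarrow> c \<in> smash_basis \<Longrightarrow> basis_map b = basis_map c \<longleftrightarrow> b = c"
  using basis_map_bij by (auto simp: bij_betw_def dest: inj_onD)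

lemma Dw_supported: "qh_supported (Dw G H \<omega>)"
  by (auto simp: qh_supported_def Let_def qvecs_def Dw_def quotient_closed qbar_closed)

text \<open>Multiplication: both products are supported on one basis element, and these
  correspond under the basis map by the identity mult_section_product.\<close>
lemma transport_mult:
  assumes b: "(m, g, x) \<in> smash_basis" and b': "(n, h, y) \<in> smash_basis" and c: "c \<in> smash_basis"
  shows "qmult (Smash G H \<omega> s) (m, g, x) (n, h, y) c
       = qmult (Dw G H \<omega>) (basis_map (m, g, x)) (basis_map (n, h, y)) (basis_map c)"
proof -
  define p where "p = (m \<otimes> n \<otimes> qsigma G H s x y, g, x \<otimes>\<^bsub>G Mod H\<^esub> y)"
  have p: "p \<in> smash_basis" using b b' qsigma_in_N quotient_closed by (auto simp: p_def)
  have "basis_map p = (g, m \<otimes> s x \<otimes> (n \<otimes> s y))"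
    using mult_section_product b b' by (simp add: p_def)
  then have "qmult (Dw G H \<omega>) (basis_map (m, g, x)) (basis_map (n, h, y)) (basis_map c)
      = (if qconj G H g x = h \<and> basis_map c = basis_map p then qtheta G H \<omega> g x y else 0)"
    using b b' by (simp add: Dw_def qbar_mult_section)
  also have "\<dots> = qmult (Smash G H \<omega> s) (m, g, x) (n, h, y) c"
    using basis_map_eq_iff[OF c p] by (simp add: Smash_def p_def)
  finally show ?thesis by simp
qed

text \<open>Comultiplication: the conditions m1 s(x1) = m s(x) = m2 s(x2) of D^omega(G,H)
  are exactly m1 = m = m2, x1 = x = x2.\<close>
lemma transport_comult:
  assumes b: "(m, g, x) \<in> smash_basis" and b1: "(m1, a, x1) \<in> smash_basis" and b2: "(m2, c, x2) \<in> smash_basis"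
  shows "qcomult (Smash G H \<omega> s) (m, g, x) ((m1, a, x1), (m2, c, x2))
       = qcomult (Dw G H \<omega>) (basis_map (m, g, x)) (basis_map (m1, a, x1), basis_map (m2, c, x2))"
  using b b1 b2 mult_section_eq_iff by (simp add: Smash_def Dw_def qbar_mult_section)

text \<open>Antipode: the image basis elements correspond by inverse_section_product.\<close>
lemma transport_antipode:
  assumes b: "(m, g, x) \<in> smash_basis" and c: "c \<in> smash_basis"
  shows "qantipode (Smash G H \<omega> s) (m, g, x) c = qantipode (Dw G H \<omega>) (basis_map (m, g, x)) (basis_map c)"
proof -
  define p where "p = (inv m \<otimes> inv (qsigma G H s x (inv\<^bsub>G Mod H\<^esub> x)),
                       qconj G H (inv\<^bsub>G Mod H\<^esub> g) x, inv\<^bsub>G Mod H\<^esub> x)"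
  have p: "p \<in> smash_basis" using b qsigma_in_N quotient_closed by (auto simp: p_def)
  have "basis_map p = (qconj G H (inv\<^bsub>G Mod H\<^esub> g) x, inv (m \<otimes> s x))"
    using inverse_section_product b by (simp add: p_def)
  then have "qantipode (Dw G H \<omega>) (basis_map (m, g, x)) (basis_map c)
      = (if basis_map c = basis_map p
         then qtheta G H \<omega> (inv\<^bsub>G Mod H\<^esub> g) x (inv\<^bsub>G Mod H\<^esub> x) / qgamma G H \<omega> x g (inv\<^bsub>G Mod H\<^esub> g)
         else 0)"
    using b by (simp add: Dw_def qbar_mult_section)
  also have "\<dots> = qantipode (Smash G H \<omega> s) (m, g, x) c"
    using basis_map_eq_iff[OF c p] by (simp add: Smash_def p_def)
  finally show ?thesis by simp
qed

text \<open>Unit, alpha and beta are supported on elements m s(x) = 1, i.e. m = 1 and x = 1;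
  the counit only depends on the coset g.\<close>
lemma transport_unit_constants:
  assumes "(m, g, x) \<in> smash_basis"
  shows "qunit (Smash G H \<omega> s) (m, g, x) = qunit (Dw G H \<omega>) (basis_map (m, g, x))"
    and "qalpha (Smash G H \<omega> s) (m, g, x) = qalpha (Dw G H \<omega>) (basis_map (m, g, x))"
    and "qbeta (Smash G H \<omega> s) (m, g, x) = qbeta (Dw G H \<omega>) (basis_map (m, g, x))"
    and "qcounit (Smash G H \<omega> s) (m, g, x) = qcounit (Dw G H \<omega>) (basis_map (m, g, x))"
  using assms mult_section_eq_one by (auto simp: Smash_def Dw_def)

lemma transport_assoc:
  assumes "(m1, g, x) \<in> smash_basis" "(m2, h, y) \<in> smash_basis" "(m3, k, z) \<in> smash_basis"
  shows "qassoc (Smash G H \<omega> s) ((m1, g, x), (m2, h, y), (m3, k, z))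
       = qassoc (Dw G H \<omega>) (basis_map (m1, g, x), basis_map (m2, h, y), basis_map (m3, k, z))"
  using assms mult_section_eq_one by (simp add: Smash_def Dw_def)

theorem smash_basis_transport: "basis_transport basis_map (Smash G H \<omega> s) (Dw G H \<omega>)"
proof -
  have "qbasis (Smash G H \<omega> s) = smash_basis" "qbasis (Dw G H \<omega>) = carrier (G Mod H) \<times> carrier G"
    by (simp_all add: Smash_def Dw_def)
  then show ?thesis
    using basis_map_bij
    by (auto simp: basis_transport_def Let_def transport_mult transport_comult transport_antipode
        transport_unit_constants transport_assoc simp del: basis_map_apply)
qed

end

theorem lemma2p2:
  fixes G :: "('a, 'm) monoid_scheme" and N :: "'a set"
    and \<omega> :: "'a set \<Rightarrow> 'a set \<Rightarrow> 'a set \<Rightarrow> complex" and s :: "'a set \<Rightarrow> 'a"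
  assumes "group G" and "finite (carrier G)" and "N \<lhd> G"
    and "\<forall>n\<in>N. \<forall>g\<in>carrier G. n \<otimes>\<^bsub>G\<^esub> g = g \<otimes>\<^bsub>G\<^esub> n"
    and "normalized_3cocycle (G Mod N) \<omega>"
    and "\<forall>a\<in>carrier (G Mod N). s a \<in> a"
    and "s \<one>\<^bsub>G Mod N\<^esub> = \<one>\<^bsub>G\<^esub>"
  shows "\<exists>M. qh_iso (Smash G N \<omega> s) (Dw G N \<omega>) M"
proof -
  interpret central_section N G s
    using assms by (auto simp: central_section_def central_section_axioms_def)
  have "finite (qbasis (Smash G N \<omega> s))"
    using finite_smash_basis[OF assms(2)] by (simp add: Smash_def)
  then show ?thesis
    using qh_iso_of_basis_transport[OF _ Dw_supported smash_basis_transport] by blast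
qed

end
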